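(* Let $M := \langle X \mid R\rangle$ where $R = \{(e,f)\}$ for some $e,f \in \langle X\rangle$, and let $d := ||e|-|f|| \in \mathbb{N}$. (1) If $d = 0$, then $M$ is half-factorial. (2) If $d \neq 0$, then $\Delta(M) = \{d\}$, and $\mathsf{L}_M(a)$ is an arithmetic progression with difference $d$ for all $a \in \langle X\rangle$.
   Context: For a set $X$, $\langle X\rangle$ is the free monoid on $X$ (identity $1$); $M=\langle X\mid R\rangle$ is the monoid presented by generators $X$ and relations $R\subseteq\langle X\rangle\times\langle X\rangle$. For $a,b\in\langle X\rangle$, $a=_M b$ means they have equal images in $M$; $|a|$ is word length. $\mathsf{L}_M(a) := \{|b| : b\in\langle X\rangle,\ b=_M a\}$ and $\mathcal{L}(M) := \{\mathsf{L}_M(a) : a\in\langle X\rangle\}$. $M$ is half-factorial if $\mathsf{L}_M(a) = \{|a|\}$ for all $a$. For $L\subseteq\mathbb{N}$, $d\in\mathbb{N}^+$ is a distance of $L$ if $[k,k+d]\cap L = \{k,k+d\}$ for some $k\in L$ (where $[n,m]$ is the set of integers between $n$ and $m$); $\Delta(L)$ is the set of distances of $L$, and $\Delta(M) := \bigcup_{L\in\mathcal{L}(M)}\Delta(L)$. (A singleton counts as an arithmetic progression with any difference.) *)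

theory Defs
  imports Main
begin

text \<open>Free monoid on the generators of type 'a: lists; identity = [], product = append.
  One-step rewriting with the relation set R: u@e@v -> u@f@v for (e,f) in R.\<close>

inductive rstep :: "('a list \<times> 'a list) set \<Rightarrow> 'a list \<Rightarrow> 'a list \<Rightarrow> bool"
  for R where
  "(e, f) \<in> R \<Longrightarrow> rstep R (u @ e @ v) (u @ f @ v)"

text \<open>Equality in the presented monoid: the congruence generated by R
  (reflexive-symmetric-transitive closure of one-step rewriting).\<close>
definition pres_eq :: "('a list \<times> 'a list) set \<Rightarrow> 'a list \<Rightarrow> 'a list \<Rightarrow> bool" where
  "pres_eq R a b \<longleftrightarrow> (\<lambda>x y. rstep R x y \<or> rstep R y x)\<^sup>*\<^sup>* a b"

definition lengths :: "('a list \<times> 'a list) set \<Rightarrow> 'a list \<Rightarrow> nat set" where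
  "lengths R a = {length b | b. pres_eq R b a}"

definition length_sets :: "('a list \<times> 'a list) set \<Rightarrow> nat set set" where
  "length_sets R = {lengths R a | a. True}"

definition half_factorial :: "('a list \<times> 'a list) set \<Rightarrow> bool" where
  "half_factorial R \<longleftrightarrow> (\<forall>a. lengths R a = {length a})"

definition distances :: "nat set \<Rightarrow> nat set" where
  "distances L = {d. d > 0 \<and> (\<exists>k\<in>L. {k..k+d} \<inter> L = {k, k+d})}"

definition monoid_distances :: "('a list \<times> 'a list) set \<Rightarrow> nat set" where
  "monoid_distances R = (\<Union>L\<in>length_sets R. distances L)"

definition arith_prog :: "nat set \<Rightarrow> nat \<Rightarrow> bool" where
  "arith_prog L d \<longleftrightarrow> (\<exists>k I. I \<noteq> {} \<and> (\<forall>i j. i \<in> I \<longrightarrow> j \<le> i \<longrightarrow> j \<in> I)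
      \<and> L = {k + i * d | i. i \<in> I})"

end

theory Submission
  imports Defs
begin

text \<open>Applying the relation changes the length of a word by exactly \<open>d\<close>, so along any chain
  of rewrites the length moves in steps of \<open>d\<close>. Hence all lengths of words equal to \<open>a\<close> lie
  in one residue class modulo \<open>d\<close>, and by a discrete intermediate value argument along a
  chain every length of that class between two attained lengths is attained as well. For
  \<open>d = 0\<close> the residue class is a single number; for \<open>d > 0\<close> the set of lengths is an
  arithmetic progression with difference \<open>d\<close>, so its only distance is \<open>d\<close>, which is
  realised by \<open>L(e) \<ni> |e|, |f|\<close>.\<close>

lemma equivclp_mod_eq:
  fixes g :: "'a \<Rightarrow> nat"
  assumes change: "\<And>x y. r x y \<Longrightarrow> g y = g x + d \<or> g x = g y + d"
    and "equivclp r a b"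
  shows "g b mod d = g a mod d"
  using assms(2)
proof induction
  case (step y z)
  then show ?case using change[of y z] change[of z y] by auto
qed simp

lemma equivclp_intermediate_value:
  fixes g :: "'a \<Rightarrow> nat"
  assumes change: "\<And>x y. r x y \<Longrightarrow> g y = g x + d \<or> g x = g y + d"
    and "equivclp r a b" "g a \<le> n" "n \<le> g b" "n mod d = g a mod d"
  shows "\<exists>c. equivclp r a c \<and> g c = n"
  using assms(2,4)
proof induction
  case base
  then show ?case using \<open>g a \<le> n\<close> by (intro exI[of _ a]) auto
next
  case (step y z)
  show ?case
  proof (cases "n \<le> g y")
    case True
    with step.IH show ?thesis by blast
  next
    case False
    with step.hyps(2) step.prems have z: "g z = g y + d"
      using change[of y z] change[of z y] by auto
    have "n mod d = g y mod d"
      using equivclp_mod_eq[of r g d, OF change step.hyps(1)] assms(5) by simp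
    then have "d dvd n - g y"
      using False by (simp add: mod_eq_dvd_iff_nat)
    then have "d \<le> n - g y"
      using False by (simp add: dvd_imp_le)
    then have "g z = n"
      using z step.prems False by simp
    then show ?thesis
      using equivclp_into_equivclp[OF step.hyps(1,2)] by blast
  qed
qed

text \<open>\<open>L\<close> is the intersection of a residue class modulo \<open>d\<close> with an interval; note that
  \<open>n mod 0 = n\<close>, so for \<open>d = 0\<close> this forces \<open>L\<close> to be at most a singleton.\<close>

definition mod_convex :: "nat set \<Rightarrow> nat \<Rightarrow> bool" where
  "mod_convex L d \<longleftrightarrow> (\<forall>k\<in>L. \<forall>m\<in>L. m mod d = k mod d)
     \<and> (\<forall>k\<in>L. \<forall>m\<in>L. \<forall>n. k \<le> n \<longrightarrow> n \<le> m \<longrightarrow> n mod d = k mod d \<longrightarrow> n \<in> L)"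

lemma mod_convexI:
  assumes "\<And>k m. k \<in> L \<Longrightarrow> m \<in> L \<Longrightarrow> m mod d = k mod d"
    and "\<And>k m n. k \<in> L \<Longrightarrow> m \<in> L \<Longrightarrow> k \<le> n \<Longrightarrow> n \<le> m \<Longrightarrow> n mod d = k mod d
      \<Longrightarrow> n \<in> L"
  shows "mod_convex L d"
  unfolding mod_convex_def using assms by blast

lemma mod_convex_mod_eq:
  "mod_convex L d \<Longrightarrow> k \<in> L \<Longrightarrow> m \<in> L \<Longrightarrow> m mod d = k mod d"
  unfolding mod_convex_def by blast

lemma mod_convex_intermediate:
  "mod_convex L d \<Longrightarrow> k \<in> L \<Longrightarrow> m \<in> L \<Longrightarrow> k \<le> n \<Longrightarrow> n \<le> m \<Longrightarrow> n mod d = k mod d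
    \<Longrightarrow> n \<in> L"
  unfolding mod_convex_def by blast

lemma mod_convex_dvd_diff:
  assumes "mod_convex L d" "k \<in> L" "m \<in> L" "k \<le> m"
  shows "d dvd m - k"
proof -
  have "m mod d = k mod d"
    using assms(1-3) by (rule mod_convex_mod_eq)
  then show ?thesis
    using assms(4) by (simp add: mod_eq_dvd_iff_nat)
qed

lemma mod_convex_zero_singleton:
  assumes "mod_convex L 0" "k \<in> L"
  shows "L = {k}"
proof -
  have "\<forall>m\<in>L. m = k"
    using mod_convex_mod_eq[OF assms(1) assms(2)] by simp
  then show ?thesis
    using assms(2) by blast
qed

lemma arith_prog_if_mod_convex:
  assumes conv: "mod_convex L d" and "L \<noteq> {}"
  shows "arith_prog L d"
proof -
  define k where "k = (LEAST x. x \<in> L)"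
  have k: "k \<in> L" "\<And>x. x \<in> L \<Longrightarrow> k \<le> x"
    using \<open>L \<noteq> {}\<close> unfolding k_def by (auto intro: LeastI_ex Least_le)
  define I where "I = {i. k + i * d \<in> L}"
  have "0 \<in> I"
    using k by (simp add: I_def)
  moreover have "j \<in> I" if "i \<in> I" "j \<le> i" for i j
  proof -
    have "k + j * d \<le> k + i * d"
      using \<open>j \<le> i\<close> by (simp add: mult_right_mono)
    then show ?thesis
      using mod_convex_intermediate[OF conv k(1)] \<open>i \<in> I\<close> unfolding I_def by simp
  qed
  moreover have "L = {k + i * d | i. i \<in> I}"
  proof (intro set_eqI iffI)
    fix x assume "x \<in> L"
    then have "d dvd x - k" "k \<le> x"
      using mod_convex_dvd_diff[OF conv k(1)] k(2) by simp_all
    then have "x = k + (x - k) div d * d"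
      by simp
    with \<open>x \<in> L\<close> show "x \<in> {k + i * d | i. i \<in> I}"
      unfolding I_def by (intro CollectI exI[of _ "(x - k) div d"]) simp
  qed (auto simp: I_def)
  ultimately show ?thesis
    unfolding arith_prog_def by blast
qed

lemma distances_subset_if_mod_convex:
  assumes conv: "mod_convex L d"
  shows "distances L \<subseteq> {d}"
proof
  fix d' assume "d' \<in> distances L"
  then obtain k where "0 < d'" "k \<in> L" and gap: "{k..k + d'} \<inter> L = {k, k + d'}"
    unfolding distances_def by blast
  moreover have "k + d' \<in> L"
    using gap by blast
  ultimately have "d dvd d'"
    using mod_convex_dvd_diff[OF conv, of k "k + d'"] by simp
  then have "0 < d" "d \<le> d'"
    using \<open>0 < d'\<close> by (auto intro: dvd_imp_le)
  then have "k + d \<in> {k..k + d'} \<inter> L"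
    using mod_convex_intermediate[OF conv \<open>k \<in> L\<close> \<open>k + d' \<in> L\<close>] by simp
  then show "d' \<in> {d}"
    using gap \<open>0 < d\<close> by auto
qed

lemma mem_distances_if_mod_convex:
  assumes conv: "mod_convex L d" and "0 < d" "k \<in> L" "k + d \<in> L"
  shows "d \<in> distances L"
proof -
  have between: "x = k \<or> x = k + d" if "k \<le> x" "x \<le> k + d" "x \<in> L" for x
  proof -
    have "d dvd x - k"
      using that mod_convex_dvd_diff[OF conv \<open>k \<in> L\<close>] by simp
    then have "x - k = 0 \<or> d \<le> x - k"
      by (auto intro: dvd_imp_le)
    then show ?thesis
      using that(1,2) by auto
  qed
  have "{k..k + d} \<inter> L = {k, k + d}"
    using assms(3,4) by (auto dest: between)
  then show ?thesis
    using \<open>0 < d\<close> \<open>k \<in> L\<close> unfolding distances_def by blast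
qed

definition length_gap :: "'a list \<Rightarrow> 'a list \<Rightarrow> nat" where
  "length_gap e f = nat \<bar>int (length e) - int (length f)\<bar>"

lemma pres_eq_equivclp: "pres_eq R = equivclp (rstep R)"
  unfolding pres_eq_def equivclp_def symclp_def ..

lemma rstep_length_change:
  assumes "rstep {(e, f)} x y"
  shows "length y = length x + length_gap e f \<or> length x = length y + length_gap e f"
  using assms by cases (auto simp: length_gap_def)

lemma lengths_equivclp: "lengths R a = {length b | b. equivclp (rstep R) a b}"
proof -
  have "equivclp (rstep R) b a \<longleftrightarrow> equivclp (rstep R) a b" for b
    using equivclp_sym by metis
  then show ?thesis
    unfolding lengths_def pres_eq_equivclp by simp
qed

lemma length_mem_lengths: "length a \<in> lengths R a"
  unfolding lengths_equivclp by (blast intro: equivclp_refl)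

lemma lengths_mod_eq:
  assumes "k \<in> lengths {(e, f)} a" "m \<in> lengths {(e, f)} a"
  shows "m mod length_gap e f = k mod length_gap e f"
proof -
  let ?r = "rstep {(e, f)}"
  obtain b c where b: "equivclp ?r a b" "k = length b" and c: "equivclp ?r a c" "m = length c"
    using assms unfolding lengths_equivclp by blast
  have "equivclp ?r b c"
    using equivclp_sym[OF b(1)] c(1) by (rule equivclp_trans)
  then show ?thesis
    using equivclp_mod_eq[of ?r length "length_gap e f", OF rstep_length_change] b(2) c(2)
    by simp
qed

lemma lengths_intermediate:
  assumes "k \<in> lengths {(e, f)} a" "m \<in> lengths {(e, f)} a"
    and "k \<le> n" "n \<le> m" "n mod length_gap e f = k mod length_gap e f"
  shows "n \<in> lengths {(e, f)} a"
proof -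
  let ?r = "rstep {(e, f)}"
  obtain b c where b: "equivclp ?r a b" "k = length b" and c: "equivclp ?r a c" "m = length c"
    using assms(1,2) unfolding lengths_equivclp by blast
  have "equivclp ?r b c"
    using equivclp_sym[OF b(1)] c(1) by (rule equivclp_trans)
  then obtain c' where "equivclp ?r b c'" "length c' = n"
    using equivclp_intermediate_value[of ?r length "length_gap e f", OF rstep_length_change]
      assms(3-5) b(2) c(2) by blast
  then have "equivclp ?r a c'" "length c' = n"
    using equivclp_trans[OF b(1)] by simp_all
  then show ?thesis
    unfolding lengths_equivclp by blast
qed

lemma mod_convex_lengths: "mod_convex (lengths {(e, f)} a) (length_gap e f)"
  by (rule mod_convexI) (fact lengths_mod_eq, fact lengths_intermediate)

lemma relator_lengths: "length e \<in> lengths {(e, f)} e" "length f \<in> lengths {(e, f)} e"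
proof -
  have "rstep {(e, f)} ([] @ e @ []) ([] @ f @ [])"
    by (rule rstep.intros) simp
  then have "equivclp (rstep {(e, f)}) e f"
    by (auto intro: r_into_equivclp)
  then show "length e \<in> lengths {(e, f)} e" "length f \<in> lengths {(e, f)} e"
    unfolding lengths_equivclp by (blast intro: equivclp_refl)+
qed

lemma length_gap_mem_distances:
  assumes "0 < length_gap e f"
  shows "length_gap e f \<in> distances (lengths {(e, f)} e)"
proof (rule mem_distances_if_mod_convex[OF mod_convex_lengths assms])
  show "min (length e) (length f) \<in> lengths {(e, f)} e"
    using relator_lengths[where e = e and f = f] by (simp add: min_def)
  have "min (length e) (length f) + length_gap e f = max (length e) (length f)"
    unfolding length_gap_def by auto
  then show "min (length e) (length f) + length_gap e f \<in> lengths {(e, f)} e"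
    using relator_lengths[where e = e and f = f] by (simp add: max_def)
qed

theorem proposition4p1:
  fixes e f :: "'a list"
  defines "d \<equiv> nat \<bar>int (length e) - int (length f)\<bar>"
  shows "(d = 0 \<longrightarrow> half_factorial {(e, f)})
       \<and> (d \<noteq> 0 \<longrightarrow> monoid_distances {(e, f)} = {d}
                   \<and> (\<forall>a. arith_prog (lengths {(e, f)} a) d))"
proof (intro conjI impI)
  have conv: "mod_convex (lengths {(e, f)} a) d" for a
    using mod_convex_lengths unfolding d_def length_gap_def .
  show "half_factorial {(e, f)}" if "d = 0"
    unfolding half_factorial_def
    using mod_convex_zero_singleton[OF conv[unfolded \<open>d = 0\<close>] length_mem_lengths] by blast
  assume "d \<noteq> 0"
  show "\<forall>a. arith_prog (lengths {(e, f)} a) d"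
    using arith_prog_if_mod_convex[OF conv] length_mem_lengths by blast
  have "monoid_distances {(e, f)} \<subseteq> {d}"
    unfolding monoid_distances_def length_sets_def using distances_subset_if_mod_convex[OF conv]
    by blast
  moreover have "d \<in> distances (lengths {(e, f)} e)"
    using length_gap_mem_distances \<open>d \<noteq> 0\<close> unfolding d_def length_gap_def by simp
  then have "d \<in> monoid_distances {(e, f)}"
    unfolding monoid_distances_def length_sets_def by blast
  ultimately show "monoid_distances {(e, f)} = {d}"
    by blast
qed

end
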